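(* Let $A$ be a set of $n$ distinct real numbers whose additive energy satisfies $E(A,A)=c|A|^2$ for some constant $c<5/2$. Then for every $a\in A$ there is an ordering $b_1,b_2,\dots,b_n$ of the elements of $A$ with $b_1=a$ such that the $n-1$ numbers $|b_2-b_1|,|b_3-b_2|,\dots,|b_n-b_{n-1}|$ are pairwise distinct.
   Context: The additive energy of a finite set $A\subset\mathbb{R}$ is $E(A,A)=|\{(x,y,z,w)\in A^4 : x+y=z+w\}|$. *)

theory Defs
  imports Complex_Main
begin

definition additive_energy :: "real set \<Rightarrow> nat" where
  "additive_energy A = card {(x, y, z, w). x \<in> A \<and> y \<in> A \<and> z \<in> A \<and> w \<in> A \<and> x + y = z + w}"

end

(*
  Fix a and let S = A - {a}, m = card S. Among the m! orderings a, p_1, ..., p_m, two gaps can only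
  coincide along a quadruple of elements of A with equal gaps other than the trivial coincidences
  (x, y, x, y) and (x, y, y, x); prescribing the at most four entries of p involved leaves at most
  (m - 4)!, (m - 3)! or (m - 2)! orderings. Summing over all pairs of positions, at most (m - 2)!/2 times
  Q orderings are bad, where Q counts the nontrivial equal-gap quadruples of A. Each of these is a
  nontrivial solution of x + w = z + y or of x + z = w + y, so Q <= 2 E(A,A) - 4 n^2 + 2 n < n^2 + 2 n when
  E(A,A) < 5 n^2 / 2, and for n >= 8 fewer than m! orderings are bad. Sets of at most seven elements are
  settled by explicit orderings.
*)
theory Submission
  imports Defs "HOL-Combinatorics.Multiset_Permutations"
begin

section \<open>Permutations with prescribed entries\<close>

definition has_entries :: "(nat \<times> 'a) list \<Rightarrow> 'a list \<Rightarrow> bool" where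
  "has_entries cs xs \<longleftrightarrow> (\<forall>(q, v) \<in> set cs. q < length xs \<and> xs ! q = v)"

lemma card_permutations_has_entries_le_remove1:
  assumes "finite S" and "distinct (map fst cs)" and px: "(p, x) \<in> set cs"
    and last: "\<And>q v. (q, v) \<in> set cs \<Longrightarrow> q \<le> p"
  shows "card {xs \<in> permutations_of_set S. has_entries cs xs}
    \<le> card {xs \<in> permutations_of_set (S - {x}). has_entries (remove1 (p, x) cs) xs}"
proof -
  let ?P = "\<lambda>S cs. {xs \<in> permutations_of_set S. has_entries cs xs}"
  have set_remove1: "set (remove1 (p, x) cs) = set cs - {(p, x)}"
    using assms(2) by (simp add: distinct_map)
  have before: "q < p" if "(q, v) \<in> set (remove1 (p, x) cs)" for q v
    using that last[of q v] px assms(2) unfolding set_remove1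
    by (metis DiffE eq_key_imp_eq_value insertI1 nat_less_le)
  define del where "del xs = take p xs @ drop (Suc p) xs" for xs :: "'a list"
  have split: "xs = take p xs @ x # drop (Suc p) xs" if "xs \<in> ?P S cs" for xs
    using that px by (auto simp: has_entries_def id_take_nth_drop)
  have "inj_on del (?P S cs)"
  proof (rule inj_onI)
    fix xs ys assume xs: "xs \<in> ?P S cs" and ys: "ys \<in> ?P S cs" and "del xs = del ys"
    moreover have "length (take p xs) = length (take p ys)"
      using xs ys px unfolding has_entries_def by fastforce
    ultimately show "xs = ys"
      using split[OF xs] split[OF ys] unfolding del_def by (metis append_eq_append_conv)
  qed
  moreover have "del ` ?P S cs \<subseteq> ?P (S - {x}) (remove1 (p, x) cs)"
  proof (rule image_subsetI)
    fix xs assume "xs \<in> ?P S cs"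
    then have xs: "xs \<in> permutations_of_set S" "has_entries cs xs" by auto
    then have "distinct (take p xs @ x # drop (Suc p) xs)" "set (take p xs @ x # drop (Suc p) xs) = S"
      using split[of xs] by (auto dest: permutations_of_setD)
    then have "del xs \<in> permutations_of_set (S - {x})"
      unfolding del_def by (auto simp: permutations_of_set_def)
    moreover have "has_entries (remove1 (p, x) cs) (del xs)"
      using xs(2) px before unfolding has_entries_def del_def set_remove1
      by (fastforce simp: nth_append)
    ultimately show "del xs \<in> ?P (S - {x}) (remove1 (p, x) cs)" by simp
  qed
  ultimately show ?thesis
    using \<open>finite S\<close> by (intro card_inj_on_le) auto
qed

lemma card_permutations_has_entries_le:
  assumes "finite S" and "distinct (map fst cs)"
  shows "card {xs \<in> permutations_of_set S. has_entries cs xs} \<le> fact (card S - length cs)"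
  using assms
proof (induction cs arbitrary: S rule: length_induct)
  case (1 cs)
  let ?P = "\<lambda>S cs. {xs \<in> permutations_of_set S. has_entries cs xs}"
  show ?case
  proof (cases "cs = [] \<or> ?P S cs = {}")
    case True
    then show ?thesis
    proof
      assume "cs = []"
      then show ?thesis using "1.prems"(1) by (simp add: has_entries_def)
    qed (metis card.empty zero_le)
  next
    case False
    then obtain xs0 where xs0: "xs0 \<in> ?P S cs" and "cs \<noteq> []" by blast
    \<comment> \<open>deleting the last prescribed position leaves the other prescribed positions unchanged\<close>
    define p where "p = Max (fst ` set cs)"
    obtain x where px: "(p, x) \<in> set cs"
      using Max_in[of "fst ` set cs"] \<open>cs \<noteq> []\<close> unfolding p_def by fastforce
    have "x \<in> S"
      using xs0 px by (auto simp: has_entries_def dest!: permutations_of_setD(1))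
    have "distinct (map fst (remove1 (p, x) cs))"
      using "1.prems"(2) by (induction cs) (auto dest: subsetD[OF set_remove1_subset])
    moreover have "length (remove1 (p, x) cs) = length cs - 1"
      using px by (simp add: length_remove1)
    ultimately have IH: "card (?P (S - {x}) (remove1 (p, x) cs)) \<le> fact (card S - length cs)"
      using "1.IH"[rule_format, of "remove1 (p, x) cs" "S - {x}"] \<open>cs \<noteq> []\<close> \<open>x \<in> S\<close> "1.prems"(1)
      by simp
    have "q \<le> p" if "(q, v) \<in> set cs" for q v
      unfolding p_def using that by (simp add: rev_image_eqI)
    with "1.prems" px have "card (?P S cs) \<le> card (?P (S - {x}) (remove1 (p, x) cs))"
      by (rule card_permutations_has_entries_le_remove1)
    with IH show ?thesis by linarith
  qed
qed

lemma card_le_card_mult_fact: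
  assumes "finite S" and "finite Q" and "X \<subseteq> permutations_of_set S"
    and covered: "\<And>xs. xs \<in> X \<Longrightarrow> \<exists>t\<in>Q. has_entries (cs t) xs"
    and entries: "\<And>t. t \<in> Q \<Longrightarrow> distinct (map fst (cs t)) \<and> length (cs t) = k"
  shows "card X \<le> card Q * fact (card S - k)"
proof -
  let ?P = "\<lambda>t. {xs \<in> permutations_of_set S. has_entries (cs t) xs}"
  have "X \<subseteq> (\<Union>t\<in>Q. ?P t)"
    using assms(3) covered by blast
  then have "card X \<le> card (\<Union>t\<in>Q. ?P t)"
    using \<open>finite S\<close> \<open>finite Q\<close> by (intro card_mono) auto
  also have "\<dots> \<le> (\<Sum>t\<in>Q. card (?P t))"
    by (rule card_UN_le[OF \<open>finite Q\<close>])
  also have "\<dots> \<le> (\<Sum>t\<in>Q. fact (card S - k))"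
    using entries card_permutations_has_entries_le[OF \<open>finite S\<close>] by (intro sum_mono) fastforce
  finally show ?thesis by simp
qed

lemma nth_permutations_of_set:
  assumes "p \<in> permutations_of_set S"
  shows "length p = card S"
    and "i < card S \<Longrightarrow> p ! i \<in> S"
    and "i < card S \<Longrightarrow> j < card S \<Longrightarrow> p ! i = p ! j \<longleftrightarrow> i = j"
  using assms distinct_card[of p] nth_eq_iff_index_eq[of p]
  by (auto simp: permutations_of_set_def)

section \<open>Equal gaps and additive energy\<close>

definition equal_gap_quadruples :: "real set \<Rightarrow> (real \<times> real \<times> real \<times> real) set" where
  "equal_gap_quadruples A = {(x, y, z, w). x \<in> A \<and> y \<in> A \<and> z \<in> A \<and> w \<in> A \<and>
     x \<noteq> y \<and> z \<noteq> w \<and> \<not> (x = z \<and> y = w) \<and> \<not> (x = w \<and> y = z) \<and> \<bar>x - y\<bar> = \<bar>z - w\<bar>}"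

lemma finite_quadruples_subset:
  "finite A \<Longrightarrow> X \<subseteq> A \<times> A \<times> A \<times> A \<Longrightarrow> finite X"
  by (meson finite_SigmaI finite_subset)

lemma finite_equal_gap_quadruples: "finite A \<Longrightarrow> finite (equal_gap_quadruples A)"
  by (erule finite_quadruples_subset) (auto simp: equal_gap_quadruples_def)

lemma card_trivial_energy_quadruples:
  assumes "finite A"
  shows "card {(x, y, z, w). x \<in> A \<and> y \<in> A \<and> z \<in> A \<and> w \<in> A \<and> ((x = z \<and> y = w) \<or> (x = w \<and> y = z))}
           + card A = 2 * card A ^ 2"
    (is "card ?T + _ = _")
proof -
  define T1 where "T1 = (\<lambda>(x, y). (x, y, x, y)) ` (A \<times> A)"
  define T2 where "T2 = (\<lambda>(x, y). (x, y, y, x)) ` (A \<times> A)"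
  have "?T = T1 \<union> T2" "T1 \<inter> T2 = (\<lambda>x. (x, x, x, x)) ` A"
    unfolding T1_def T2_def by auto
  moreover have "card T1 = card A ^ 2" "card T2 = card A ^ 2"
    unfolding T1_def T2_def
    by (subst card_image; force simp: inj_on_def card_cartesian_product power2_eq_square)+
  moreover have "card ((\<lambda>x. (x, x, x, x)) ` A) = card A"
    by (rule card_image) (auto simp: inj_on_def)
  moreover have "finite T1" "finite T2"
    unfolding T1_def T2_def using assms by auto
  ultimately show ?thesis
    using card_Un_Int[of T1 T2] by simp
qed

lemma card_add_le_card_if_inj_on_into_Diff:
  assumes "finite E" and "T \<subseteq> E" and "inj_on f X" and "f ` X \<subseteq> E - T"
  shows "card X + card T \<le> card E"
proof -
  have "card X = card (f ` X)"
    using assms(3) by (simp add: card_image)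
  also have "\<dots> \<le> card (E - T)"
    using assms(1,4) by (intro card_mono) auto
  also have "\<dots> = card E - card T"
    using assms(1,2) by (simp add: card_Diff_subset finite_subset)
  finally show ?thesis
    using card_mono[OF assms(1,2)] by linarith
qed

lemma card_equal_gap_quadruples_le_energy:
  assumes "finite A"
  shows "card (equal_gap_quadruples A) + 4 * card A ^ 2 \<le> 2 * additive_energy A + 2 * card A"
proof -
  define E where "E = {(x, y, z, w). x \<in> A \<and> y \<in> A \<and> z \<in> A \<and> w \<in> A \<and> x + y = z + w}"
  define T where "T = {(x, y, z, w). x \<in> A \<and> y \<in> A \<and> z \<in> A \<and> w \<in> A \<and> ((x = z \<and> y = w) \<or> (x = w \<and> y = z))}"
  define Q where "Q = equal_gap_quadruples A"
  define QP where "QP = {(x, y, z, w) \<in> Q. x - y = z - w}"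
  define QM where "QM = {(x, y, z, w) \<in> Q. x - y = w - z}"
  have "QP \<subseteq> Q" "QM \<subseteq> Q" unfolding QP_def QM_def by auto
  then have "finite QP" "finite QM"
    using finite_equal_gap_quadruples[OF assms] finite_subset unfolding Q_def by auto
  moreover have "finite E" "finite T"
    unfolding E_def T_def by (auto intro!: finite_quadruples_subset[OF assms])
  ultimately have fin: "finite E" "finite T" "finite QP" "finite QM" by auto
  have "T \<subseteq> E" unfolding T_def E_def by auto
  \<comment> \<open>\<open>x - y = z - w\<close> gives the nontrivial energy quadruple \<open>x + w = z + y\<close>, and
    \<open>x - y = w - z\<close> gives \<open>x + z = w + y\<close>\<close>
  have "(\<lambda>(x, y, z, w). (x, w, z, y)) ` QP \<subseteq> E - T"
    unfolding QP_def Q_def equal_gap_quadruples_def E_def T_def by auto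
  then have card_QP: "card QP + card T \<le> card E"
    using fin \<open>T \<subseteq> E\<close> by (intro card_add_le_card_if_inj_on_into_Diff) (auto simp: inj_on_def)
  have "(\<lambda>(x, y, z, w). (x, z, w, y)) ` QM \<subseteq> E - T"
    unfolding QM_def Q_def equal_gap_quadruples_def E_def T_def by auto
  then have card_QM: "card QM + card T \<le> card E"
    using fin \<open>T \<subseteq> E\<close> by (intro card_add_le_card_if_inj_on_into_Diff) (auto simp: inj_on_def)
  have "Q \<subseteq> QP \<union> QM"
  proof
    fix t assume "t \<in> Q"
    then obtain x y z w where "t = (x, y, z, w)" "\<bar>x - y\<bar> = \<bar>z - w\<bar>"
      unfolding Q_def equal_gap_quadruples_def by auto
    moreover from this(2) have "x - y = z - w \<or> x - y = w - z" by (auto simp: abs_eq_iff)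
    ultimately show "t \<in> QP \<union> QM" using \<open>t \<in> Q\<close> unfolding QP_def QM_def by auto
  qed
  then have "card Q \<le> card QP + card QM"
    using fin card_mono[of "QP \<union> QM" Q] card_Un_le[of QP QM] by simp
  then show ?thesis
    using card_QP card_QM card_trivial_energy_quadruples[OF assms]
    unfolding Q_def T_def additive_energy_def E_def[symmetric] by linarith
qed

lemma card_equal_gap_quadruples_less:
  assumes "finite A" and "real (additive_energy A) < 5 / 2 * real (card A) ^ 2"
  shows "card (equal_gap_quadruples A) < card A ^ 2 + 2 * card A"
proof -
  have "real (card (equal_gap_quadruples A) + 4 * card A ^ 2) \<le> real (2 * additive_energy A + 2 * card A)"
    using card_equal_gap_quadruples_le_energy[OF assms(1)] by (simp only: of_nat_le_iff)
  with assms(2) have "real (card (equal_gap_quadruples A)) < real (card A ^ 2 + 2 * card A)"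
    by simp
  then show ?thesis by (simp only: of_nat_less_iff)
qed

section \<open>Counting orderings with a repeated gap\<close>

definition gap :: "real list \<Rightarrow> nat \<Rightarrow> real" where
  "gap bs i = \<bar>bs ! (i + 1) - bs ! i\<bar>"

definition distinct_gaps :: "real list \<Rightarrow> bool" where
  "distinct_gaps bs \<longleftrightarrow> distinct (map (gap bs) [0..<length bs - 1])"

lemma ex_equal_gaps_if_not_distinct_gaps:
  assumes "\<not> distinct_gaps (a # p)"
  shows "\<exists>i j. i < j \<and> j < length p \<and> gap (a # p) i = gap (a # p) j"
proof -
  from assms obtain i j where "i < length p" "j < length p" "i \<noteq> j" "gap (a # p) i = gap (a # p) j"
    unfolding distinct_gaps_def distinct_map inj_on_def by auto
  then show ?thesis by (metis linorder_neqE_nat)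
qed

text \<open>The nontrivial equal-gap quadruples met by gaps \<open>i < j\<close> of an ordering \<open>a # p\<close>, by the shape
  of \<open>(i, j)\<close>: both gaps inside \<open>p\<close> with \<open>i + 2 \<le> j\<close> (separated), \<open>i = 0 < 2 \<le> j\<close> (separated,
  from \<open>a\<close>), \<open>0 < i\<close> and \<open>j = i + 1\<close> (adjacent, the shared element occurring as \<open>y = z\<close>),
  and \<open>(i, j) = (0, 1)\<close> (adjacent, from \<open>a\<close>).\<close>

definition separated_equal_gaps :: "real set \<Rightarrow> (real \<times> real \<times> real \<times> real) set" where
  "separated_equal_gaps S = {(x, y, z, w). x \<in> S \<and> y \<in> S \<and> z \<in> S \<and> w \<in> S \<and>
     distinct [x, y, z, w] \<and> \<bar>x - y\<bar> = \<bar>z - w\<bar>}"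

definition separated_equal_gaps_from :: "real \<Rightarrow> real set \<Rightarrow> (real \<times> real \<times> real \<times> real) set" where
  "separated_equal_gaps_from a S = {(x, y, z, w). x = a \<and> y \<in> S \<and> z \<in> S \<and> w \<in> S \<and>
     distinct [y, z, w] \<and> \<bar>x - y\<bar> = \<bar>z - w\<bar>}"

definition adjacent_equal_gaps :: "real set \<Rightarrow> (real \<times> real \<times> real \<times> real) set" where
  "adjacent_equal_gaps S = {(x, y, z, w). x \<in> S \<and> y \<in> S \<and> w \<in> S \<and> z = y \<and>
     distinct [x, y, w] \<and> \<bar>x - y\<bar> = \<bar>y - w\<bar>}"

definition adjacent_equal_gaps_from :: "real \<Rightarrow> real set \<Rightarrow> (real \<times> real \<times> real \<times> real) set" where
  "adjacent_equal_gaps_from a S = {(x, y, z, w). x = a \<and> y \<in> S \<and> w \<in> S \<and> z = y \<and>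
     y \<noteq> w \<and> \<bar>x - y\<bar> = \<bar>y - w\<bar>}"

lemmas equal_gaps_defs = separated_equal_gaps_def separated_equal_gaps_from_def
  adjacent_equal_gaps_def adjacent_equal_gaps_from_def

lemma finite_equal_gaps:
  assumes "finite S"
  shows "finite (separated_equal_gaps S)" "finite (separated_equal_gaps_from a S)"
    "finite (adjacent_equal_gaps S)" "finite (adjacent_equal_gaps_from a S)"
  by (auto intro!: finite_quadruples_subset[of "insert a S"] simp: assms equal_gaps_defs)

context
  fixes a :: real and S :: "real set" and i j :: nat
  assumes "finite S"
begin

text \<open>Gap \<open>i > 0\<close> of \<open>a # p\<close> compares the entries \<open>i - 1\<close> and \<open>i\<close> of \<open>p\<close>.\<close>

lemma card_separated_equal_gaps_le:
  assumes "1 \<le> i" "i + 2 \<le> j" "j < card S"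
  shows "card {p \<in> permutations_of_set S. gap (a # p) i = gap (a # p) j}
           \<le> card (separated_equal_gaps S) * fact (card S - 4)"
proof (rule card_le_card_mult_fact[OF \<open>finite S\<close> finite_equal_gaps(1)[OF \<open>finite S\<close>],
      where cs = "\<lambda>(x, y, z, w). [(i - 1, x), (i, y), (j - 1, z), (j, w)]"])
  fix p assume "p \<in> {p \<in> permutations_of_set S. gap (a # p) i = gap (a # p) j}"
  then have p: "p \<in> permutations_of_set S" "gap (a # p) i = gap (a # p) j" by auto
  have "(p ! (i - 1), p ! i, p ! (j - 1), p ! j) \<in> separated_equal_gaps S"
    using p assms nth_permutations_of_set[OF p(1)]
    by (auto simp: separated_equal_gaps_def gap_def abs_minus_commute)
  moreover have "has_entries [(i - 1, p ! (i - 1)), (i, p ! i), (j - 1, p ! (j - 1)), (j, p ! j)] p"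
    using assms nth_permutations_of_set[OF p(1)] by (auto simp: has_entries_def)
  ultimately show "\<exists>t\<in>separated_equal_gaps S. has_entries
      ((\<lambda>(x, y, z, w). [(i - 1, x), (i, y), (j - 1, z), (j, w)]) t) p"
    by force
qed (use assms in auto)

lemma card_separated_equal_gaps_from_le:
  assumes "2 \<le> j" "j < card S"
  shows "card {p \<in> permutations_of_set S. gap (a # p) 0 = gap (a # p) j}
           \<le> card (separated_equal_gaps_from a S) * fact (card S - 3)"
proof (rule card_le_card_mult_fact[OF \<open>finite S\<close> finite_equal_gaps(2)[OF \<open>finite S\<close>],
      where cs = "\<lambda>(x, y, z, w). [(0, y), (j - 1, z), (j, w)]"])
  fix p assume "p \<in> {p \<in> permutations_of_set S. gap (a # p) 0 = gap (a # p) j}"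
  then have p: "p \<in> permutations_of_set S" "gap (a # p) 0 = gap (a # p) j" by auto
  have "(a, p ! 0, p ! (j - 1), p ! j) \<in> separated_equal_gaps_from a S"
    using p assms nth_permutations_of_set[OF p(1)]
    by (auto simp: separated_equal_gaps_from_def gap_def abs_minus_commute)
  moreover have "has_entries [(0, p ! 0), (j - 1, p ! (j - 1)), (j, p ! j)] p"
    using assms nth_permutations_of_set[OF p(1)] by (auto simp: has_entries_def)
  ultimately show "\<exists>t\<in>separated_equal_gaps_from a S. has_entries
      ((\<lambda>(x, y, z, w). [(0, y), (j - 1, z), (j, w)]) t) p"
    by force
qed (use assms in auto)

lemma card_adjacent_equal_gaps_le:
  assumes "1 \<le> i" "i + 1 < card S"
  shows "card {p \<in> permutations_of_set S. gap (a # p) i = gap (a # p) (i + 1)}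
           \<le> card (adjacent_equal_gaps S) * fact (card S - 3)"
proof (rule card_le_card_mult_fact[OF \<open>finite S\<close> finite_equal_gaps(3)[OF \<open>finite S\<close>],
      where cs = "\<lambda>(x, y, z, w). [(i - 1, x), (i, y), (i + 1, w)]"])
  fix p assume "p \<in> {p \<in> permutations_of_set S. gap (a # p) i = gap (a # p) (i + 1)}"
  then have p: "p \<in> permutations_of_set S" "gap (a # p) i = gap (a # p) (i + 1)" by auto
  have "(p ! (i - 1), p ! i, p ! i, p ! (i + 1)) \<in> adjacent_equal_gaps S"
    using p assms nth_permutations_of_set[OF p(1)]
    by (auto simp: adjacent_equal_gaps_def gap_def abs_minus_commute)
  moreover have "has_entries [(i - 1, p ! (i - 1)), (i, p ! i), (i + 1, p ! (i + 1))] p"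
    using assms nth_permutations_of_set[OF p(1)] by (auto simp: has_entries_def)
  ultimately show "\<exists>t\<in>adjacent_equal_gaps S. has_entries
      ((\<lambda>(x, y, z, w). [(i - 1, x), (i, y), (i + 1, w)]) t) p"
    by force
qed (use assms in auto)

lemma card_adjacent_equal_gaps_from_le:
  assumes "2 \<le> card S"
  shows "card {p \<in> permutations_of_set S. gap (a # p) 0 = gap (a # p) 1}
           \<le> card (adjacent_equal_gaps_from a S) * fact (card S - 2)"
proof (rule card_le_card_mult_fact[OF \<open>finite S\<close> finite_equal_gaps(4)[OF \<open>finite S\<close>],
      where cs = "\<lambda>(x, y, z, w). [(0, y), (1, w)]"])
  fix p assume "p \<in> {p \<in> permutations_of_set S. gap (a # p) 0 = gap (a # p) 1}"
  then have p: "p \<in> permutations_of_set S" "gap (a # p) 0 = gap (a # p) 1" by auto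
  have "(a, p ! 0, p ! 0, p ! 1) \<in> adjacent_equal_gaps_from a S"
    using p assms nth_permutations_of_set[OF p(1)]
    by (auto simp: adjacent_equal_gaps_from_def gap_def abs_minus_commute)
  moreover have "has_entries [(0, p ! 0), (1, p ! 1)] p"
    using assms nth_permutations_of_set[OF p(1)] by (auto simp: has_entries_def)
  ultimately show "\<exists>t\<in>adjacent_equal_gaps_from a S. has_entries
      ((\<lambda>(x, y, z, w). [(0, y), (1, w)]) t) p"
    by force
qed auto

end

lemma sum_pairs_split:
  fixes g :: "nat \<times> nat \<Rightarrow> 'a::comm_monoid_add"
  assumes "2 \<le> m"
  shows "(\<Sum>ij\<in>{(i, j). i < j \<and> j < m}. g ij)
    = (\<Sum>ij\<in>{(i, j). 1 \<le> i \<and> i + 2 \<le> j \<and> j < m}. g ij) + (\<Sum>j\<in>{2..<m}. g (0, j))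
      + g (0, 1) + (\<Sum>i\<in>{1..<m - 1}. g (i, i + 1))"
proof -
  define T where "T = {(i, j). 1 \<le> i \<and> i + 2 \<le> j \<and> j < m}"
  define T0 where "T0 = (\<lambda>j. (0::nat, j)) ` {2..<m}"
  define T1 where "T1 = (\<lambda>i. (i, i + 1)) ` {1..<m - 1}"
  have pairs: "{(i, j). i < j \<and> j < m} = T \<union> T0 \<union> insert (0, 1) T1"
  proof (intro equalityI subsetI)
    fix ij assume "ij \<in> {(i, j). i < j \<and> j < m}"
    then obtain i j where "ij = (i, j)" "i < j" "j < m" by blast
    then show "ij \<in> T \<union> T0 \<union> insert (0, 1) T1"
      unfolding T_def T0_def T1_def
      by (cases "i = 0"; cases "j = i + 1") (auto simp: image_iff)
  qed (use assms in \<open>auto simp: T_def T0_def T1_def\<close>)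
  have "finite T"
    by (rule finite_subset[of _ "{..<m} \<times> {..<m}"]) (auto simp: T_def)
  moreover have "finite T0" "finite T1" "T \<inter> T0 = {}" "(T \<union> T0) \<inter> insert (0, 1) T1 = {}" "(0, 1) \<notin> T1"
    by (auto simp: T_def T0_def T1_def)
  ultimately have "sum g (T \<union> T0 \<union> insert (0, 1) T1) = sum g T + sum g T0 + (g (0, 1) + sum g T1)"
    by (simp add: sum.union_disjoint add_ac)
  moreover have "sum g T0 = (\<Sum>j\<in>{2..<m}. g (0, j))" "sum g T1 = (\<Sum>i\<in>{1..<m - 1}. g (i, i + 1))"
    unfolding T0_def T1_def by (simp_all add: sum.reindex inj_on_def)
  ultimately show ?thesis
    unfolding pairs by (simp add: T_def add.assoc)
qed

lemma card_separated_index_pairs: "2 * card {(i::nat, j). 1 \<le> i \<and> i + 2 \<le> j \<and> j < m} = (m - 2) * (m - 3)"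
proof (induction m)
  case (Suc m)
  have split: "{(i::nat, j). 1 \<le> i \<and> i + 2 \<le> j \<and> j < Suc m}
      = {(i, j). 1 \<le> i \<and> i + 2 \<le> j \<and> j < m} \<union> (\<lambda>i. (i, m)) ` {1..m - 2}"
    by auto
  have "finite {(i::nat, j). 1 \<le> i \<and> i + 2 \<le> j \<and> j < m}"
    by (rule finite_subset[of _ "{..<m} \<times> {..<m}"]) auto
  then have card_Suc: "card {(i::nat, j). 1 \<le> i \<and> i + 2 \<le> j \<and> j < Suc m}
      = card {(i::nat, j). 1 \<le> i \<and> i + 2 \<le> j \<and> j < m} + (m - 2)"
    unfolding split by (subst card_Un_disjoint) (auto simp: card_image inj_on_def)
  show ?case
  proof (cases "m \<ge> 3")
    case True
    then obtain k where "m = k + 3" by (metis add.commute le_iff_add)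
    with Suc.IH card_Suc show ?thesis by (simp add: algebra_simps)
  qed (use Suc.IH card_Suc in simp)
qed simp

lemma sum_card_equal_gap_permutations_le:
  assumes "finite S" and "4 \<le> card S"
  shows "2 * (\<Sum>(i, j)\<in>{(i, j). i < j \<and> j < card S}.
               card {p \<in> permutations_of_set S. gap (a # p) i = gap (a # p) j})
    \<le> fact (card S - 2) * (card (separated_equal_gaps S) + 2 * card (separated_equal_gaps_from a S)
          + 2 * card (adjacent_equal_gaps_from a S) + 2 * card (adjacent_equal_gaps S))"
proof -
  define m where "m = card S"
  define g where "g = (\<lambda>(i, j). card {p \<in> permutations_of_set S. gap (a # p) i = gap (a # p) j})"
  define T where "T = {(i::nat, j). 1 \<le> i \<and> i + 2 \<le> j \<and> j < m}"
  obtain k where k: "m = k + 4"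
    using assms(2) unfolding m_def by (metis add.commute le_iff_add)
  have fact_m: "fact (m - 2) = (m - 2) * (m - 3) * fact (m - 4)" "fact (m - 2) = (m - 2) * fact (m - 3)"
    unfolding k by (simp_all add: numeral_eq_Suc algebra_simps)
  have "sum g T \<le> card T * (card (separated_equal_gaps S) * fact (m - 4))"
    using card_separated_equal_gaps_le[OF \<open>finite S\<close>]
    by (intro sum_bounded_above[where 'a = nat, simplified]) (auto simp: g_def T_def m_def)
  then have "2 * sum g T \<le> 2 * card T * (card (separated_equal_gaps S) * fact (m - 4))"
    by simp
  also have "\<dots> = fact (m - 2) * card (separated_equal_gaps S)"
    unfolding T_def card_separated_index_pairs fact_m(1) by simp
  finally have "2 * sum g T \<le> fact (m - 2) * card (separated_equal_gaps S)" .
  moreover have "(\<Sum>j\<in>{2..<m}. g (0, j)) \<le> card {2..<m} * (card (separated_equal_gaps_from a S) * fact (m - 3))"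
    using card_separated_equal_gaps_from_le[OF \<open>finite S\<close>]
    by (intro sum_bounded_above[where 'a = nat, simplified]) (auto simp: g_def m_def)
  then have "(\<Sum>j\<in>{2..<m}. g (0, j)) \<le> fact (m - 2) * card (separated_equal_gaps_from a S)"
    unfolding fact_m(2) by (simp add: ac_simps)
  moreover have "g (0, 1) \<le> fact (m - 2) * card (adjacent_equal_gaps_from a S)"
    using card_adjacent_equal_gaps_from_le[OF \<open>finite S\<close>, of a] assms(2) by (simp add: g_def m_def mult.commute)
  moreover have "(\<Sum>i\<in>{1..<m - 1}. g (i, i + 1)) \<le> card {1..<m - 1} * (card (adjacent_equal_gaps S) * fact (m - 3))"
    using card_adjacent_equal_gaps_le[OF \<open>finite S\<close>]
    by (intro sum_bounded_above[where 'a = nat, simplified]) (auto simp: g_def m_def)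
  then have "(\<Sum>i\<in>{1..<m - 1}. g (i, i + 1)) \<le> fact (m - 2) * card (adjacent_equal_gaps S)"
    unfolding fact_m(2) by (simp add: numeral_eq_Suc ac_simps)
  moreover have "(\<Sum>(i, j)\<in>{(i, j). i < j \<and> j < m}. card {p \<in> permutations_of_set S. gap (a # p) i = gap (a # p) j})
      = sum g T + (\<Sum>j\<in>{2..<m}. g (0, j)) + g (0, 1) + (\<Sum>i\<in>{1..<m - 1}. g (i, i + 1))"
    using sum_pairs_split[of m g] assms(2) unfolding g_def T_def m_def by simp
  ultimately show ?thesis
    unfolding m_def[symmetric] by (simp add: distrib_left)
qed

text \<open>Swapping the two pairs maps the last three families onto equal-gap quadruples outside all four
  families; this accounts for their factor 2.\<close>

lemma card_equal_gaps_le_equal_gap_quadruples: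
  assumes "finite S" and "a \<notin> S"
  shows "card (separated_equal_gaps S) + 2 * card (separated_equal_gaps_from a S)
      + 2 * card (adjacent_equal_gaps_from a S) + 2 * card (adjacent_equal_gaps S)
    \<le> card (equal_gap_quadruples (insert a S))"
proof -
  let ?X1 = "separated_equal_gaps S" and ?X2 = "separated_equal_gaps_from a S"
    and ?X3 = "adjacent_equal_gaps_from a S" and ?X4 = "adjacent_equal_gaps S"
  define swap :: "real \<times> real \<times> real \<times> real \<Rightarrow> _" where "swap = (\<lambda>(x, y, z, w). (z, w, x, y))"
  let ?U = "?X1 \<union> ?X2 \<union> ?X3 \<union> ?X4" and ?V = "?X2 \<union> ?X3 \<union> ?X4"
  have fin: "finite ?X1" "finite ?X2" "finite ?X3" "finite ?X4"
    using finite_equal_gaps[OF assms(1)] by blast+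
  have "?X1 \<inter> ?X2 = {}" "?X1 \<inter> ?X3 = {}" "?X1 \<inter> ?X4 = {}"
    "?X2 \<inter> ?X3 = {}" "?X2 \<inter> ?X4 = {}" "?X3 \<inter> ?X4 = {}"
    using assms(2) by (auto simp: equal_gaps_defs)
  then have card_U: "card ?U = card ?X1 + card ?X2 + card ?X3 + card ?X4"
    and card_V: "card ?V = card ?X2 + card ?X3 + card ?X4"
    using fin by (simp_all add: card_Un_disjoint Int_Un_distrib2)
  have "card (swap ` ?V) = card ?V"
    by (rule card_image) (auto simp: inj_on_def swap_def)
  moreover have "?U \<inter> swap ` ?V = {}"
    using assms(2) by (auto simp: equal_gaps_defs swap_def)
  moreover have "?U \<union> swap ` ?V \<subseteq> equal_gap_quadruples (insert a S)"
    using assms(2) by (auto simp: equal_gaps_defs equal_gap_quadruples_def swap_def abs_minus_commute)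
  ultimately have "card ?U + card ?V \<le> card (equal_gap_quadruples (insert a S))"
    using fin finite_equal_gap_quadruples[of "insert a S"] assms(1)
    by (metis card_Un_disjoint card_mono finite_Un finite_imageI finite_insert)
  then show ?thesis
    using card_U card_V by simp
qed

lemma fact_eq_mult_fact_diff2: "2 \<le> m \<Longrightarrow> fact m = m * (m - 1) * (fact (m - 2) :: nat)"
  by (cases m; cases "m - 1") (auto simp: algebra_simps)

lemma ex_permutation_distinct_gaps:
  assumes "finite S" and "a \<notin> S" and "4 \<le> card S"
    and few_quadruples: "card (equal_gap_quadruples (insert a S)) < 2 * card S * (card S - 1)"
  shows "\<exists>p \<in> permutations_of_set S. distinct_gaps (a # p)"
proof (rule ccontr)
  assume no_good: "\<not> ?thesis"
  define m where "m = card S"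
  define P where "P = {(i, j). i < j \<and> j < m}"
  define B where "B = (\<lambda>(i, j). {p \<in> permutations_of_set S. gap (a # p) i = gap (a # p) j})"
  have "finite P"
    by (rule finite_subset[of _ "{..<m} \<times> {..<m}"]) (auto simp: P_def)
  have "permutations_of_set S \<subseteq> (\<Union>ij\<in>P. B ij)"
  proof
    fix p assume p: "p \<in> permutations_of_set S"
    then obtain i j where "i < j" "j < m" "gap (a # p) i = gap (a # p) j"
      using no_good ex_equal_gaps_if_not_distinct_gaps nth_permutations_of_set(1)[OF p]
      unfolding m_def by metis
    with p show "p \<in> (\<Union>ij\<in>P. B ij)" unfolding P_def B_def by blast
  qed
  then have "card (permutations_of_set S) \<le> card (\<Union>ij\<in>P. B ij)"
    using \<open>finite P\<close> \<open>finite S\<close> by (intro card_mono) (auto simp: B_def)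
  then have "fact m \<le> card (\<Union>ij\<in>P. B ij)"
    using \<open>finite S\<close> unfolding m_def by simp
  also have "\<dots> \<le> (\<Sum>ij\<in>P. card (B ij))"
    by (rule card_UN_le[OF \<open>finite P\<close>])
  finally have "2 * fact m \<le> 2 * (\<Sum>ij\<in>P. card (B ij))" by simp
  also have "\<dots> \<le> fact (m - 2) * card (equal_gap_quadruples (insert a S))"
    using sum_card_equal_gap_permutations_le[OF \<open>finite S\<close> \<open>4 \<le> card S\<close>, of a]
      card_equal_gaps_le_equal_gap_quadruples[OF \<open>finite S\<close> \<open>a \<notin> S\<close>]
    unfolding P_def B_def m_def prod.case_distrib[of card] by (meson le_trans mult_le_mono2)
  also have "\<dots> < fact (m - 2) * (2 * m * (m - 1))"
    using few_quadruples unfolding m_def by simp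
  also have "\<dots> = 2 * fact m"
    using fact_eq_mult_fact_diff2[of m] \<open>4 \<le> card S\<close> unfolding m_def by simp
  finally show False by simp
qed

section \<open>Sets of at most seven elements\<close>

text \<open>Which ordering has distinct gaps may depend on the actual values, not only on their order;
  hence some positions of \<open>a\<close> need several candidates.\<close>

lemma ex_distinct_gaps_ordering_from_candidates:
  assumes "distinct xs"
    and "\<exists>bs\<in>set cs. distinct_gaps bs"
    and "\<forall>bs\<in>set cs. hd bs = a \<and> set bs = set xs \<and> length bs = length xs"
  shows "\<exists>bs. distinct bs \<and> set bs = set xs \<and> hd bs = a \<and> distinct_gaps bs"
  using assms by (metis card_distinct distinct_card)

lemma ex_distinct_gaps_ordering_1:
  assumes "a \<in> set [x1]"
  shows "\<exists>bs. distinct bs \<and> set bs = set [x1] \<and> hd bs = a \<and> distinct_gaps bs"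
  using assms by (intro exI[of _ "[x1]"]) (simp add: distinct_gaps_def)

lemma ex_distinct_gaps_ordering_2:
  assumes "sorted_wrt (<) [x1, x2]" and "a \<in> set [x1, x2]"
  shows "\<exists>bs. distinct bs \<and> set bs = set [x1, x2] \<and> hd bs = a \<and> distinct_gaps bs"
proof (cases "a = x1")
  case True
  with assms show ?thesis by (intro exI[of _ "[x1, x2]"]) (auto simp: distinct_gaps_def)
next
  case False
  with assms show ?thesis by (intro exI[of _ "[x2, x1]"]) (auto simp: distinct_gaps_def)
qed

lemma ex_distinct_gaps_ordering_3:
  assumes "sorted_wrt (<) [x1, x2, x3]" and "a \<in> set [x1, x2, x3]"
  shows "\<exists>bs. distinct bs \<and> set bs = set [x1, x2, x3] \<and> hd bs = a \<and> distinct_gaps bs"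
proof -
  have lt: "x1 < x2" "x2 < x3" and dist: "distinct [x1, x2, x3]"
    using assms(1) by (auto simp: strict_sorted_iff)
  from assms(2) consider "a = x1" | "a = x2" | "a = x3" by auto
  then show ?thesis
  proof cases
    case 1
    have "\<exists>bs\<in>set [[x1, x3, x2]]. distinct_gaps bs"
      using lt by (simp add: distinct_gaps_def gap_def upt_rec abs_if; smt (verit))
    then show ?thesis by (rule ex_distinct_gaps_ordering_from_candidates[OF dist]) (use 1 in auto)
  next
    case 2
    have "\<exists>bs\<in>set [[x2, x1, x3]]. distinct_gaps bs"
      using lt by (simp add: distinct_gaps_def gap_def upt_rec abs_if; smt (verit))
    then show ?thesis by (rule ex_distinct_gaps_ordering_from_candidates[OF dist]) (use 2 in auto)
  next
    case 3
    have "\<exists>bs\<in>set [[x3, x1, x2]]. distinct_gaps bs"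
      using lt by (simp add: distinct_gaps_def gap_def upt_rec abs_if; smt (verit))
    then show ?thesis by (rule ex_distinct_gaps_ordering_from_candidates[OF dist]) (use 3 in auto)
  qed
qed

lemma ex_distinct_gaps_ordering_4:
  assumes "sorted_wrt (<) [x1, x2, x3, x4]" and "a \<in> set [x1, x2, x3, x4]"
  shows "\<exists>bs. distinct bs \<and> set bs = set [x1, x2, x3, x4] \<and> hd bs = a \<and> distinct_gaps bs"
proof -
  have lt: "x1 < x2" "x2 < x3" "x3 < x4" and dist: "distinct [x1, x2, x3, x4]"
    using assms(1) by (auto simp: strict_sorted_iff)
  from assms(2) consider "a = x1" | "a = x2" | "a = x3" | "a = x4" by auto
  then show ?thesis
  proof cases
    case 1
    have "\<exists>bs\<in>set [[x1, x4, x2, x3]]. distinct_gaps bs"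
      using lt by (simp add: distinct_gaps_def gap_def upt_rec abs_if; smt (verit))
    then show ?thesis by (rule ex_distinct_gaps_ordering_from_candidates[OF dist]) (use 1 in auto)
  next
    case 2
    have "\<exists>bs\<in>set [[x2, x3, x1, x4]]. distinct_gaps bs"
      using lt by (simp add: distinct_gaps_def gap_def upt_rec abs_if; smt (verit))
    then show ?thesis by (rule ex_distinct_gaps_ordering_from_candidates[OF dist]) (use 2 in auto)
  next
    case 3
    have "\<exists>bs\<in>set [[x3, x2, x4, x1]]. distinct_gaps bs"
      using lt by (simp add: distinct_gaps_def gap_def upt_rec abs_if; smt (verit))
    then show ?thesis by (rule ex_distinct_gaps_ordering_from_candidates[OF dist]) (use 3 in auto)
  next
    case 4
    have "\<exists>bs\<in>set [[x4, x1, x3, x2]]. distinct_gaps bs"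
      using lt by (simp add: distinct_gaps_def gap_def upt_rec abs_if; smt (verit))
    then show ?thesis by (rule ex_distinct_gaps_ordering_from_candidates[OF dist]) (use 4 in auto)
  qed
qed

lemma ex_distinct_gaps_ordering_5:
  assumes "sorted_wrt (<) [x1, x2, x3, x4, x5]" and "a \<in> set [x1, x2, x3, x4, x5]"
  shows "\<exists>bs. distinct bs \<and> set bs = set [x1, x2, x3, x4, x5] \<and> hd bs = a \<and> distinct_gaps bs"
proof -
  have lt: "x1 < x2" "x2 < x3" "x3 < x4" "x4 < x5" and dist: "distinct [x1, x2, x3, x4, x5]"
    using assms(1) by (auto simp: strict_sorted_iff)
  from assms(2) consider "a = x1" | "a = x2" | "a = x3" | "a = x4" | "a = x5" by auto
  then show ?thesis
  proof cases
    case 1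
    have "\<exists>bs\<in>set [[x1, x5, x2, x4, x3]]. distinct_gaps bs"
      using lt by (simp add: distinct_gaps_def gap_def upt_rec abs_if; smt (verit))
    then show ?thesis by (rule ex_distinct_gaps_ordering_from_candidates[OF dist]) (use 1 in auto)
  next
    case 2
    have "\<exists>bs\<in>set [[x2, x3, x5, x1, x4], [x2, x4, x3, x5, x1], [x2, x5, x1, x4, x3]]. distinct_gaps bs"
      using lt by (simp add: distinct_gaps_def gap_def upt_rec abs_if; smt (verit))
    then show ?thesis by (rule ex_distinct_gaps_ordering_from_candidates[OF dist]) (use 2 in auto)
  next
    case 3
    have "\<exists>bs\<in>set [[x3, x2, x4, x1, x5]]. distinct_gaps bs"
      using lt by (simp add: distinct_gaps_def gap_def upt_rec abs_if; smt (verit))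
    then show ?thesis by (rule ex_distinct_gaps_ordering_from_candidates[OF dist]) (use 3 in auto)
  next
    case 4
    have "\<exists>bs\<in>set [[x4, x1, x5, x2, x3], [x4, x2, x3, x1, x5], [x4, x3, x1, x5, x2]]. distinct_gaps bs"
      using lt by (simp add: distinct_gaps_def gap_def upt_rec abs_if; smt (verit))
    then show ?thesis by (rule ex_distinct_gaps_ordering_from_candidates[OF dist]) (use 4 in auto)
  next
    case 5
    have "\<exists>bs\<in>set [[x5, x1, x4, x2, x3]]. distinct_gaps bs"
      using lt by (simp add: distinct_gaps_def gap_def upt_rec abs_if; smt (verit))
    then show ?thesis by (rule ex_distinct_gaps_ordering_from_candidates[OF dist]) (use 5 in auto)
  qed
qed

lemma ex_distinct_gaps_ordering_6:
  assumes "sorted_wrt (<) [x1, x2, x3, x4, x5, x6]" and "a \<in> set [x1, x2, x3, x4, x5, x6]"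
  shows "\<exists>bs. distinct bs \<and> set bs = set [x1, x2, x3, x4, x5, x6] \<and> hd bs = a \<and> distinct_gaps bs"
proof -
  have lt: "x1 < x2" "x2 < x3" "x3 < x4" "x4 < x5" "x5 < x6" and dist: "distinct [x1, x2, x3, x4, x5, x6]"
    using assms(1) by (auto simp: strict_sorted_iff)
  from assms(2) consider "a = x1" | "a = x2" | "a = x3" | "a = x4" | "a = x5" | "a = x6" by auto
  then show ?thesis
  proof cases
    case 1
    have "\<exists>bs\<in>set [[x1, x6, x2, x5, x3, x4]]. distinct_gaps bs"
      using lt by (simp add: distinct_gaps_def gap_def upt_rec abs_if; smt (verit))
    then show ?thesis by (rule ex_distinct_gaps_ordering_from_candidates[OF dist]) (use 1 in auto)
  next
    case 2
    have "\<exists>bs\<in>set [[x2, x1, x5, x4, x6, x3], [x2, x6, x1, x4, x3, x5], [x2, x6, x1, x5, x3, x4]]. distinct_gaps bs"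
      using lt by (simp add: distinct_gaps_def gap_def upt_rec abs_if; smt (verit))
    then show ?thesis by (rule ex_distinct_gaps_ordering_from_candidates[OF dist]) (use 2 in auto)
  next
    case 3
    have "\<exists>bs\<in>set [[x3, x4, x2, x5, x1, x6]]. distinct_gaps bs"
      using lt by (simp add: distinct_gaps_def gap_def upt_rec abs_if; smt (verit))
    then show ?thesis by (rule ex_distinct_gaps_ordering_from_candidates[OF dist]) (use 3 in auto)
  next
    case 4
    have "\<exists>bs\<in>set [[x4, x3, x5, x2, x6, x1]]. distinct_gaps bs"
      using lt by (simp add: distinct_gaps_def gap_def upt_rec abs_if; smt (verit))
    then show ?thesis by (rule ex_distinct_gaps_ordering_from_candidates[OF dist]) (use 4 in auto)
  next
    case 5
    have "\<exists>bs\<in>set [[x5, x1, x6, x2, x4, x3], [x5, x1, x6, x3, x4, x2], [x5, x6, x2, x3, x1, x4]]. distinct_gaps bs"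
      using lt by (simp add: distinct_gaps_def gap_def upt_rec abs_if; smt (verit))
    then show ?thesis by (rule ex_distinct_gaps_ordering_from_candidates[OF dist]) (use 5 in auto)
  next
    case 6
    have "\<exists>bs\<in>set [[x6, x1, x5, x2, x4, x3]]. distinct_gaps bs"
      using lt by (simp add: distinct_gaps_def gap_def upt_rec abs_if; smt (verit))
    then show ?thesis by (rule ex_distinct_gaps_ordering_from_candidates[OF dist]) (use 6 in auto)
  qed
qed

lemma ex_distinct_gaps_ordering_7:
  assumes "sorted_wrt (<) [x1, x2, x3, x4, x5, x6, x7]" and "a \<in> set [x1, x2, x3, x4, x5, x6, x7]"
  shows "\<exists>bs. distinct bs \<and> set bs = set [x1, x2, x3, x4, x5, x6, x7] \<and> hd bs = a \<and> distinct_gaps bs"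
proof -
  have lt: "x1 < x2" "x2 < x3" "x3 < x4" "x4 < x5" "x5 < x6" "x6 < x7" and dist: "distinct [x1, x2, x3, x4, x5, x6, x7]"
    using assms(1) by (auto simp: strict_sorted_iff)
  from assms(2) consider "a = x1" | "a = x2" | "a = x3" | "a = x4" | "a = x5" | "a = x6" | "a = x7" by auto
  then show ?thesis
  proof cases
    case 1
    have "\<exists>bs\<in>set [[x1, x7, x2, x6, x3, x5, x4]]. distinct_gaps bs"
      using lt by (simp add: distinct_gaps_def gap_def upt_rec abs_if; smt (verit))
    then show ?thesis by (rule ex_distinct_gaps_ordering_from_candidates[OF dist]) (use 1 in auto)
  next
    case 2
    have "\<exists>bs\<in>set [[x2, x5, x1, x6, x7, x4, x3], [x2, x5, x3, x4, x7, x1, x6], [x2, x6, x1, x7, x4, x5, x3], [x2, x7, x1, x6, x3, x5, x4]]. distinct_gaps bs"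
      using lt by (simp add: distinct_gaps_def gap_def upt_rec abs_if; smt (verit))
    then show ?thesis by (rule ex_distinct_gaps_ordering_from_candidates[OF dist]) (use 2 in auto)
  next
    case 3
    have "\<exists>bs\<in>set [[x3, x4, x2, x5, x1, x6, x7], [x3, x4, x2, x6, x1, x7, x5], [x3, x4, x5, x2, x6, x1, x7], [x3, x4, x6, x1, x5, x2, x7], [x3, x5, x4, x2, x6, x1, x7], [x3, x5, x4, x6, x2, x7, x1], [x3, x5, x4, x7, x1, x6, x2], [x3, x7, x1, x6, x2, x5, x4]]. distinct_gaps bs"
      using lt by (simp add: distinct_gaps_def gap_def upt_rec abs_if; smt (verit))
    then show ?thesis by (rule ex_distinct_gaps_ordering_from_candidates[OF dist]) (use 3 in auto)
  next
    case 4
    have "\<exists>bs\<in>set [[x4, x3, x5, x2, x6, x1, x7]]. distinct_gaps bs"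
      using lt by (simp add: distinct_gaps_def gap_def upt_rec abs_if; smt (verit))
    then show ?thesis by (rule ex_distinct_gaps_ordering_from_candidates[OF dist]) (use 4 in auto)
  next
    case 5
    have "\<exists>bs\<in>set [[x5, x1, x7, x2, x4, x3, x6], [x5, x2, x4, x3, x6, x1, x7], [x5, x3, x4, x2, x6, x1, x7], [x5, x4, x2, x7, x1, x6, x3]]. distinct_gaps bs"
      using lt by (simp add: distinct_gaps_def gap_def upt_rec abs_if; smt (verit))
    then show ?thesis by (rule ex_distinct_gaps_ordering_from_candidates[OF dist]) (use 5 in auto)
  next
    case 6
    have "\<exists>bs\<in>set [[x6, x1, x7, x2, x5, x3, x4], [x6, x2, x7, x1, x4, x3, x5], [x6, x2, x7, x1, x5, x3, x4], [x6, x3, x4, x2, x7, x1, x5]]. distinct_gaps bs"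
      using lt by (simp add: distinct_gaps_def gap_def upt_rec abs_if; smt (verit))
    then show ?thesis by (rule ex_distinct_gaps_ordering_from_candidates[OF dist]) (use 6 in auto)
  next
    case 7
    have "\<exists>bs\<in>set [[x7, x1, x6, x2, x5, x3, x4]]. distinct_gaps bs"
      using lt by (simp add: distinct_gaps_def gap_def upt_rec abs_if; smt (verit))
    then show ?thesis by (rule ex_distinct_gaps_ordering_from_candidates[OF dist]) (use 7 in auto)
  qed
qed

lemma ex_distinct_gaps_ordering_small:
  assumes "finite A" and "card A \<le> 7" and "a \<in> A"
  shows "\<exists>bs. distinct bs \<and> set bs = A \<and> hd bs = a \<and> distinct_gaps bs"
proof -
  define xs where "xs = sorted_list_of_set A"
  have xs: "sorted_wrt (<) xs" "set xs = A" "length xs = card A"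
    using assms(1) by (simp_all add: xs_def strict_sorted_list_of_set)
  have "card A \<noteq> 0"
    using assms(1,3) by auto
  with assms(2) xs(3) consider (1) x1 where "xs = [x1]" | (2) x1 x2 where "xs = [x1, x2]"
    | (3) x1 x2 x3 where "xs = [x1, x2, x3]" | (4) x1 x2 x3 x4 where "xs = [x1, x2, x3, x4]"
    | (5) x1 x2 x3 x4 x5 where "xs = [x1, x2, x3, x4, x5]"
    | (6) x1 x2 x3 x4 x5 x6 where "xs = [x1, x2, x3, x4, x5, x6]"
    | (7) x1 x2 x3 x4 x5 x6 x7 where "xs = [x1, x2, x3, x4, x5, x6, x7]"
    by (auto simp: length_Suc_conv numeral_eq_Suc le_Suc_eq)
  moreover have a_in: "a \<in> set xs" using xs(2) assms(3) by simp
  ultimately have "\<exists>bs. distinct bs \<and> set bs = set xs \<and> hd bs = a \<and> distinct_gaps bs"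
  proof cases
    case (1 x1)
    then show ?thesis using ex_distinct_gaps_ordering_1[of a x1] a_in by simp
  next
    case (2 x1 x2)
    then show ?thesis using ex_distinct_gaps_ordering_2[of x1 x2 a] xs(1) a_in by simp
  next
    case (3 x1 x2 x3)
    then show ?thesis using ex_distinct_gaps_ordering_3[of x1 x2 x3 a] xs(1) a_in by simp
  next
    case (4 x1 x2 x3 x4)
    then show ?thesis using ex_distinct_gaps_ordering_4[of x1 x2 x3 x4 a] xs(1) a_in by simp
  next
    case (5 x1 x2 x3 x4 x5)
    then show ?thesis using ex_distinct_gaps_ordering_5[of x1 x2 x3 x4 x5 a] xs(1) a_in by simp
  next
    case (6 x1 x2 x3 x4 x5 x6)
    then show ?thesis using ex_distinct_gaps_ordering_6[of x1 x2 x3 x4 x5 x6 a] xs(1) a_in by simp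
  next
    case (7 x1 x2 x3 x4 x5 x6 x7)
    then show ?thesis using ex_distinct_gaps_ordering_7[of x1 x2 x3 x4 x5 x6 x7 a] xs(1) a_in by simp
  qed
  then show ?thesis using xs(2) by simp
qed

lemma ex_distinct_gaps_ordering_large:
  assumes "finite A" and "8 \<le> card A" and "a \<in> A"
    and "real (additive_energy A) < 5 / 2 * real (card A) ^ 2"
  shows "\<exists>bs. distinct bs \<and> set bs = A \<and> hd bs = a \<and> distinct_gaps bs"
proof -
  define S where "S = A - {a}"
  have S: "finite S" "a \<notin> S" "insert a S = A" "card S = card A - 1"
    using assms(1,3) unfolding S_def by auto
  have "card (equal_gap_quadruples A) < card A ^ 2 + 2 * card A"
    using card_equal_gap_quadruples_less[OF assms(1,4)] .
  also have "\<dots> \<le> 2 * card S * (card S - 1)"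
  proof -
    obtain k where "card A = k + 8"
      using assms(2) by (metis add.commute le_iff_add)
    then show ?thesis using S(4) by (simp add: power2_eq_square algebra_simps)
  qed
  finally have "card (equal_gap_quadruples (insert a S)) < 2 * card S * (card S - 1)"
    using S(3) by simp
  moreover have "4 \<le> card S"
    using assms(2) S(4) by simp
  ultimately obtain p where "p \<in> permutations_of_set S" "distinct_gaps (a # p)"
    using ex_permutation_distinct_gaps[OF S(1,2)] by blast
  then show ?thesis
    using S(2,3) by (intro exI[of _ "a # p"]) (auto dest: permutations_of_setD)
qed

theorem theorem2:
  fixes A :: "real set" and c :: real and a :: real
  assumes "finite A"
    and "real (additive_energy A) = c * real (card A) ^ 2"
    and "c < 5 / 2"
    and "a \<in> A"
  shows "\<exists>bs :: real list. distinct bs \<and> set bs = A \<and> hd bs = a \<and>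
           distinct (map (\<lambda>i. \<bar>bs ! (i + 1) - bs ! i\<bar>) [0..<length bs - 1])"
proof -
  have "\<exists>bs. distinct bs \<and> set bs = A \<and> hd bs = a \<and> distinct_gaps bs"
  proof (cases "card A \<le> 7")
    case True
    then show ?thesis
      using ex_distinct_gaps_ordering_small[OF assms(1) _ assms(4)] by blast
  next
    case False
    moreover have "real (additive_energy A) < 5 / 2 * real (card A) ^ 2"
      using assms(2,3) False by simp
    ultimately show ?thesis
      using ex_distinct_gaps_ordering_large[OF assms(1) _ assms(4)] by simp
  qed
  then show ?thesis
    unfolding distinct_gaps_def gap_def[abs_def] by simp
qed

end
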